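(* Consider a Factored Non-stationary MDP whose data are generated by the structural equations below, and suppose that all change factors $\boldsymbol{\theta}^s_t$ and $\boldsymbol{\theta}^r_t$ are observed (so the joint process of states, actions, rewards and change factors is a Markov process). Assume the causal Markov condition and faithfulness hold for the dynamic Bayesian network $\mathcal{G}$ with respect to the joint distribution of all these variables (i.e., conditional independences among the variables correspond exactly to d-separations in $\mathcal{G}$ unrolled over time). Then all binary masks $\boldsymbol{C}^{\boldsymbol{s}\to\boldsymbol{s}}$, $\boldsymbol{C}^{\boldsymbol{a}\to\boldsymbol{s}}$, $\boldsymbol{C}^{\boldsymbol{\theta}^s\to\boldsymbol{s}}$, $\boldsymbol{c}^{\boldsymbol{s}\to r}$, $\boldsymbol{c}^{\boldsymbol{a}\to r}$, $\boldsymbol{C}^{\boldsymbol{\theta}^s\to\boldsymbol{\theta}^s}$ and $\boldsymbol{C}^{\boldsymbol{\theta}^r\to\boldsymbol{\theta}^r}$ are identifiable from the joint distribution of the observed variables; that is, the causal graph $\mathcal{G}$ can be fully recovered.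
   Context: States $\boldsymbol{s}_t=(s_{1,t},\dots,s_{d,t})\in\mathbb{R}^d$, actions $\boldsymbol{a}_t\in\mathbb{R}^m$, rewards $r_t\in\mathbb{R}$, dynamics change factors $\boldsymbol{\theta}^s_t\in\mathbb{R}^p$, reward change factors $\boldsymbol{\theta}^r_t\in\mathbb{R}^q$. The generative process is, for $i=1,\dots,d$, $j=1,\dots,p$, $k=1,\dots,q$: $s_{i,t}=f_i(\boldsymbol{c}^{\boldsymbol{s}\to\boldsymbol{s}}_i\odot\boldsymbol{s}_{t-1},\ \boldsymbol{c}^{\boldsymbol{a}\to\boldsymbol{s}}_i\odot\boldsymbol{a}_{t-1},\ \boldsymbol{c}^{\boldsymbol{\theta}^s\to\boldsymbol{s}}_i\odot\boldsymbol{\theta}^s_t,\ \epsilon^s_{i,t})$; $r_t=h(\boldsymbol{c}^{\boldsymbol{s}\to r}\odot\boldsymbol{s}_t,\ \boldsymbol{c}^{\boldsymbol{a}\to r}\odot\boldsymbol{a}_t,\ \boldsymbol{\theta}^r_t,\ \epsilon^r_t)$; $\theta^s_{j,t}=g^s(\boldsymbol{c}^{\boldsymbol{\theta}^s\to\boldsymbol{\theta}^s}_j\odot\boldsymbol{\theta}^s_{t-1},\ \epsilon^{\theta^s}_t)$; $\theta^r_{k,t}=g^r(\boldsymbol{c}^{\boldsymbol{\theta}^r\to\boldsymbol{\theta}^r}_k\odot\boldsymbol{\theta}^r_{t-1},\ \epsilon^{\theta^r}_t)$, where $\odot$ is the elementwise product, $f_i,h,g^s,g^r$ are (nonlinear)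 functions, and all noise terms are i.i.d. and mutually independent. The binary masks $\boldsymbol{c}^{\boldsymbol{s}\to\boldsymbol{s}}_i\in\{0,1\}^d$, $\boldsymbol{c}^{\boldsymbol{a}\to\boldsymbol{s}}_i\in\{0,1\}^m$, $\boldsymbol{c}^{\boldsymbol{\theta}^s\to\boldsymbol{s}}_i\in\{0,1\}^p$, $\boldsymbol{c}^{\boldsymbol{s}\to r}\in\{0,1\}^d$, $\boldsymbol{c}^{\boldsymbol{a}\to r}\in\{0,1\}^m$, $\boldsymbol{c}^{\boldsymbol{\theta}^s\to\boldsymbol{\theta}^s}_j\in\{0,1\}^p$, $\boldsymbol{c}^{\boldsymbol{\theta}^r\to\boldsymbol{\theta}^r}_k\in\{0,1\}^q$ are time-invariant and grouped into matrices $\boldsymbol{C}^{\boldsymbol{s}\to\boldsymbol{s}}=[\boldsymbol{c}^{\boldsymbol{s}\to\boldsymbol{s}}_i]_{i=1}^d$, $\boldsymbol{C}^{\boldsymbol{a}\to\boldsymbol{s}}=[\boldsymbol{c}^{\boldsymbol{a}\to\boldsymbol{s}}_i]_{i=1}^d$, $\boldsymbol{C}^{\boldsymbol{\theta}^s\to\boldsymbol{s}}=[\boldsymbol{c}^{\boldsymbol{\theta}^s\to\boldsymbol{s}}_i]_{i=1}^d$, $\boldsymbol{C}^{\boldsymbol{\theta}^s\to\boldsymbol{\theta}^s}=[\boldsymbol{c}^{\boldsymbol{\theta}^s\to\boldsymbol{\theta}^s}_j]_{j=1}^p$, $\boldsymbol{C}^{\boldsymbol{\theta}^r\to\boldsymbol{\theta}^r}=[\boldsymbol{c}^{\boldsymbol{\theta}^r\to\boldsymbol{\theta}^r}_k]_{k=1}^q$.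 The dynamic Bayesian network $\mathcal{G}$ has an edge from a variable to the left-hand-side variable of an equation exactly when the corresponding mask entry equals $1$ (each component of $\boldsymbol{\theta}^r_t$ is a parent of $r_t$). Standing assumptions: the graph is time-invariant, there are no unobserved confounders, there are no instantaneous causal effects among state, action and reward variables, and actions are not caused by any other variable of the system. *)

theory Defs
  imports "HOL-Probability.Probability"
begin

text \<open>St i t = s_{i,t}, Ac k t = a_{k,t}, Rw t = r_t, Ts j t = theta^s_{j,t}, Tr k t = theta^r_{k,t}.
  Indices are 0-based (i < d, k < m, j < p, k < q), time t :: nat.\<close>
datatype var = St nat nat | Ac nat nat | Rw nat | Ts nat nat | Tr nat nat

text \<open>The binary masks. css i i' is entry i' of c^{s->s}_i, cas i k entry k of c^{a->s}_i,
  cts i j entry j of c^{theta^s->s}_i, csr i entry i of c^{s->r}, car k entry k of c^{a->r},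
  ctt j j' entry j' of c^{theta^s->theta^s}_j, crr k k' entry k' of c^{theta^r->theta^r}_k.\<close>
record masks =
  css :: "nat \<Rightarrow> nat \<Rightarrow> bool"
  cas :: "nat \<Rightarrow> nat \<Rightarrow> bool"
  cts :: "nat \<Rightarrow> nat \<Rightarrow> bool"
  csr :: "nat \<Rightarrow> bool"
  car :: "nat \<Rightarrow> bool"
  ctt :: "nat \<Rightarrow> nat \<Rightarrow> bool"
  crr :: "nat \<Rightarrow> nat \<Rightarrow> bool"

definition vars :: "nat \<Rightarrow> nat \<Rightarrow> nat \<Rightarrow> nat \<Rightarrow> var set" where
  "vars d m p q = {St i t | i t. i < d} \<union> {Ac k t | k t. k < m} \<union> range Rw
     \<union> {Ts j t | j t. j < p} \<union> {Tr k t | k t. k < q}"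

text \<open>The structural equations
  for s_t and theta_t are read for t >= 1 (initial variables at t = 0 have no parents);
  the reward equation holds for every t.\<close>
fun dbn_edge :: "nat \<Rightarrow> nat \<Rightarrow> nat \<Rightarrow> nat \<Rightarrow> masks \<Rightarrow> var \<Rightarrow> var \<Rightarrow> bool" where
  "dbn_edge d m p q c (St i' t') (St i t) = (i < d \<and> i' < d \<and> t = Suc t' \<and> css c i i')"
| "dbn_edge d m p q c (Ac k t') (St i t) = (i < d \<and> k < m \<and> t = Suc t' \<and> cas c i k)"
| "dbn_edge d m p q c (Ts j t') (St i t) = (i < d \<and> j < p \<and> t' = t \<and> 1 \<le> t \<and> cts c i j)"
| "dbn_edge d m p q c (St i t') (Rw t) = (i < d \<and> t' = t \<and> csr c i)"
| "dbn_edge d m p q c (Ac k t') (Rw t) = (k < m \<and> t' = t \<and> car c k)"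
| "dbn_edge d m p q c (Tr k t') (Rw t) = (k < q \<and> t' = t)"
| "dbn_edge d m p q c (Ts j' t') (Ts j t) = (j < p \<and> j' < p \<and> t = Suc t' \<and> ctt c j j')"
| "dbn_edge d m p q c (Tr k' t') (Tr k t) = (k < q \<and> k' < q \<and> t = Suc t' \<and> crr c k k')"
| "dbn_edge d m p q c u v = False"

definition active_path :: "('v \<Rightarrow> 'v \<Rightarrow> bool) \<Rightarrow> 'v set \<Rightarrow> 'v list \<Rightarrow> bool" where
  "active_path E Z xs \<longleftrightarrow>
     distinct xs \<and> xs \<noteq> [] \<and>
     (\<forall>n. Suc n < length xs \<longrightarrow> E (xs ! n) (xs ! Suc n) \<or> E (xs ! Suc n) (xs ! n)) \<and>
     (\<forall>n. 0 < n \<and> Suc n < length xs \<longrightarrow>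
        (if E (xs ! (n - 1)) (xs ! n) \<and> E (xs ! Suc n) (xs ! n)
         then (\<exists>z\<in>Z. E\<^sup>*\<^sup>* (xs ! n) z)
         else xs ! n \<notin> Z))"

definition d_separated :: "('v \<Rightarrow> 'v \<Rightarrow> bool) \<Rightarrow> 'v set \<Rightarrow> 'v set \<Rightarrow> 'v set \<Rightarrow> bool" where
  "d_separated E A B Z \<longleftrightarrow>
     \<not> (\<exists>xs. hd xs \<in> A \<and> last xs \<in> B \<and> active_path E Z xs)"

definition gen_sigma :: "'w measure \<Rightarrow> ('v \<Rightarrow> 'w \<Rightarrow> real) \<Rightarrow> 'v set \<Rightarrow> 'w measure" where
  "gen_sigma M X I = sigma (space M) (\<Union>v\<in>I. {X v -` B \<inter> space M | B. B \<in> sets borel})"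

definition cond_indep :: "'w measure \<Rightarrow> ('v \<Rightarrow> 'w \<Rightarrow> real) \<Rightarrow> 'v set \<Rightarrow> 'v set \<Rightarrow> 'v set \<Rightarrow> bool" where
  "cond_indep M X A B C \<longleftrightarrow>
     (\<forall>E \<in> sets (gen_sigma M X A).
        AE w in M. real_cond_exp M (gen_sigma M X (B \<union> C)) (indicator E) w
                 = real_cond_exp M (gen_sigma M X C) (indicator E) w)"

definition markov_faithful :: "'w measure \<Rightarrow> ('v \<Rightarrow> 'w \<Rightarrow> real) \<Rightarrow> 'v set \<Rightarrow> ('v \<Rightarrow> 'v \<Rightarrow> bool) \<Rightarrow> bool" where
  "markov_faithful M X V E \<longleftrightarrow>
     (\<forall>A B C. finite A \<and> finite B \<and> finite C \<and> A \<subseteq> V \<and> B \<subseteq> V \<and> C \<subseteq> V \<and>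
        A \<noteq> {} \<and> B \<noteq> {} \<and> A \<inter> B = {} \<and> A \<inter> C = {} \<and> B \<inter> C = {} \<longrightarrow>
        (cond_indep M X A B C \<longleftrightarrow> d_separated E A B C))"

definition same_masks :: "nat \<Rightarrow> nat \<Rightarrow> nat \<Rightarrow> nat \<Rightarrow> masks \<Rightarrow> masks \<Rightarrow> bool" where
  "same_masks d m p q c1 c2 \<longleftrightarrow>
     (\<forall>i<d. \<forall>i'<d. css c1 i i' = css c2 i i') \<and>
     (\<forall>i<d. \<forall>k<m. cas c1 i k = cas c2 i k) \<and>
     (\<forall>i<d. \<forall>j<p. cts c1 i j = cts c2 i j) \<and>
     (\<forall>i<d. csr c1 i = csr c2 i) \<and>
     (\<forall>k<m. car c1 k = car c2 k) \<and>
     (\<forall>j<p. \<forall>j'<p. ctt c1 j j' = ctt c2 j j') \<and>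
     (\<forall>k<q. \<forall>k'<q. crr c1 k k' = crr c2 k k')"

end

theory Submission
  imports Defs
begin

text \<open>Every variable of the unrolled network is, given its parents, d-separated from every
  non-descendant that is not a parent (local Markov property of a DAG).  So if the mask
  entries of two graphs that are both faithful to the distribution differed, the child
  would be d-separated from the extra parent given its parents in one graph but
  d-connected to it by the single edge in the other, while conditional independence does
  not depend on the graph.  Acyclicity comes from a rank that increases along every edge:
  time steps, with actions and change factors before states and states before rewards.\<close>

lemma rank_le_of_rtranclp:
  fixes r :: "'v \<Rightarrow> nat"
  assumes "\<And>a b. E a b \<Longrightarrow> r a < r b" and "E\<^sup>*\<^sup>* a b"
  shows "r a \<le> r b"
  using assms(2) by induction (auto dest: assms(1))

lemma active_pathD:
  assumes "active_path E Z xs"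
  shows active_path_nonempty: "xs \<noteq> []"
    and active_path_adjacent:
      "Suc n < length xs \<Longrightarrow> E (xs ! n) (xs ! Suc n) \<or> E (xs ! Suc n) (xs ! n)"
    and active_path_collider:
      "\<lbrakk>0 < n; Suc n < length xs; E (xs ! (n - 1)) (xs ! n); E (xs ! Suc n) (xs ! n)\<rbrakk>
        \<Longrightarrow> \<exists>z\<in>Z. E\<^sup>*\<^sup>* (xs ! n) z"
    and active_path_non_collider:
      "\<lbrakk>0 < n; Suc n < length xs; \<not> (E (xs ! (n - 1)) (xs ! n) \<and> E (xs ! Suc n) (xs ! n))\<rbrakk>
        \<Longrightarrow> xs ! n \<notin> Z"
  using assms unfolding active_path_def by auto

lemma active_path_points_away_from_end:
  fixes r :: "'v \<Rightarrow> nat"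
  assumes rank: "\<And>a b. E a b \<Longrightarrow> r a < r b"
    and path: "active_path E {w. E w v} xs"
    and len: "length xs = Suc (Suc n)" and last: "xs ! Suc n = v"
    and out: "E v (xs ! n)" and "k \<le> n"
  shows "E (xs ! Suc k) (xs ! k) \<and> E\<^sup>*\<^sup>* v (xs ! k)"
  using \<open>k \<le> n\<close>
proof (induction k rule: inc_induct)
  case base
  show ?case using out last by auto
next
  case (step i)
  then have into: "E (xs ! Suc (Suc i)) (xs ! Suc i)" and reach: "E\<^sup>*\<^sup>* v (xs ! Suc i)"
    by auto
  have inside: "Suc (Suc i) < length xs" using step.hyps(2) len by simp
  have "\<not> E (xs ! i) (xs ! Suc i)"
  proof
    assume "E (xs ! i) (xs ! Suc i)"
    then obtain z where "E z v" "E\<^sup>*\<^sup>* (xs ! Suc i) z"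
      using active_path_collider[OF path, of "Suc i"] into inside by auto
    with reach have "E\<^sup>*\<^sup>* v z" "E z v" by auto
    then show False using rank_le_of_rtranclp[of E r] rank by (meson leD)
  qed
  then have "E (xs ! Suc i) (xs ! i)"
    using active_path_adjacent[OF path, of i] inside by auto
  with reach show ?case by (meson rtranclp.rtrancl_into_rtrancl)
qed

lemma d_separated_from_parents:
  fixes r :: "'v \<Rightarrow> nat"
  assumes rank: "\<And>a b. E a b \<Longrightarrow> r a < r b"
    and less: "r u < r v" and not_parent: "\<not> E u v"
  shows "d_separated E {u} {v} {w. E w v}"
  unfolding d_separated_def
proof
  assume "\<exists>xs. hd xs \<in> {u} \<and> last xs \<in> {v} \<and> active_path E {w. E w v} xs"
  then obtain xs where hd: "hd xs = u" and last: "last xs = v"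
    and path: "active_path E {w. E w v} xs" by blast
  then obtain n where len: "length xs = Suc n"
    using active_path_nonempty by (cases xs) auto
  then have "xs \<noteq> []" by auto
  then have first: "xs ! 0 = u" and final: "xs ! n = v"
    using hd last len by (simp_all add: hd_conv_nth last_conv_nth)
  then obtain n' where n: "n = Suc n'" using less by (cases n) auto
  have adjacent: "E (xs ! n') v \<or> E v (xs ! n')"
    using active_path_adjacent[OF path, of n'] len n final by auto
  show False
  proof (cases "E (xs ! n') v")
    case True
    with first not_parent have "n' \<noteq> 0" by (cases n') auto
    moreover have "\<not> E v (xs ! n')" using rank[of v "xs ! n'"] rank[OF True] by linarith
    ultimately have "xs ! n' \<notin> {w. E w v}"
      using active_path_non_collider[OF path, of n'] len n final by auto
    with True show False by simp
  next
    case False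
    with adjacent have "E v (xs ! n')" by simp
    moreover have "length xs = Suc (Suc n')" "xs ! Suc n' = v" using len n final by simp_all
    ultimately have "E\<^sup>*\<^sup>* v (xs ! 0)"
      using active_path_points_away_from_end[of E r, OF rank path, where k = 0] by blast
    then have "E\<^sup>*\<^sup>* v u" using first by simp
    with rank_le_of_rtranclp[of E r] rank less show False by (meson leD)
  qed
qed

lemma edge_not_d_separated:
  assumes "E u v" and "u \<noteq> v"
  shows "\<not> d_separated E {u} {v} C"
proof -
  have "active_path E C [u, v]"
    using assms unfolding active_path_def by (auto simp: less_Suc_eq)
  then show ?thesis unfolding d_separated_def by force
qed

lemma markov_faithful_edge_mono:
  fixes r :: "'v \<Rightarrow> nat"
  assumes faithful: "markov_faithful M X V E"
    and markov: "markov_faithful M X V E'"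
    and rank: "\<And>a b. E a b \<Longrightarrow> r a < r b" and rank': "\<And>a b. E' a b \<Longrightarrow> r a < r b"
    and parents: "\<And>w. finite {x. E' x w} \<and> {x. E' x w} \<subseteq> V"
    and "u \<in> V" "v \<in> V" and edge: "E u v"
  shows "E' u v"
proof (rule ccontr)
  assume missing: "\<not> E' u v"
  let ?C = "{w. E' w v}"
  have less: "r u < r v" using rank[OF edge] .
  then have "d_separated E' {u} {v} ?C"
    using d_separated_from_parents[of E' r, OF rank' _ missing] by blast
  moreover have "u \<noteq> v" "u \<notin> ?C" "v \<notin> ?C"
    using less missing rank'[of v v] by auto
  ultimately have "cond_indep M X {u} {v} ?C"
    and "d_separated E {u} {v} ?C \<longleftrightarrow> cond_indep M X {u} {v} ?C"
    using markov faithful parents[of v] \<open>u \<in> V\<close> \<open>v \<in> V\<close> unfolding markov_faithful_def by auto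
  then show False using edge_not_d_separated[of E u v] edge \<open>u \<noteq> v\<close> by blast
qed

fun dbn_rank :: "var \<Rightarrow> nat" where
  "dbn_rank (St i t) = 3 * t + 1"
| "dbn_rank (Ac k t) = 3 * t"
| "dbn_rank (Rw t) = 3 * t + 2"
| "dbn_rank (Ts j t) = 3 * t"
| "dbn_rank (Tr k t) = 3 * t"

lemma dbn_rank_less: "dbn_edge d m p q c u v \<Longrightarrow> dbn_rank u < dbn_rank v"
  by (cases u; cases v) auto

lemma dbn_parent_in_vars: "dbn_edge d m p q c u v \<Longrightarrow> u \<in> vars d m p q"
  by (cases u; cases v) (auto simp: vars_def)

lemma finite_vars_rank_less: "finite {w \<in> vars d m p q. dbn_rank w < N}"
proof (rule finite_subset)
  show "{w \<in> vars d m p q. dbn_rank w < N} \<subseteq>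
      case_prod St ` ({..<d} \<times> {..<N}) \<union> case_prod Ac ` ({..<m} \<times> {..<N}) \<union> Rw ` {..<N}
      \<union> case_prod Ts ` ({..<p} \<times> {..<N}) \<union> case_prod Tr ` ({..<q} \<times> {..<N})"
    by (auto simp: vars_def image_iff)
qed auto

lemma dbn_parents_finite_in_vars:
  "finite {u. dbn_edge d m p q c u v} \<and> {u. dbn_edge d m p q c u v} \<subseteq> vars d m p q"
proof
  have "{u. dbn_edge d m p q c u v} \<subseteq> {w \<in> vars d m p q. dbn_rank w < dbn_rank v}"
    using dbn_parent_in_vars dbn_rank_less by blast
  then show "finite {u. dbn_edge d m p q c u v}"
    using finite_vars_rank_less finite_subset by blast
qed (use dbn_parent_in_vars in blast)

lemma markov_faithful_dbn_edge_mono: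
  assumes "markov_faithful M X (vars d m p q) (dbn_edge d m p q c)"
    and "markov_faithful M X (vars d m p q) (dbn_edge d m p q c')"
    and "u \<in> vars d m p q" "v \<in> vars d m p q" "dbn_edge d m p q c u v"
  shows "dbn_edge d m p q c' u v"
  by (rule markov_faithful_edge_mono[where E = "dbn_edge d m p q c"
        and E' = "dbn_edge d m p q c'" and r = dbn_rank])
    (use assms dbn_rank_less dbn_parents_finite_in_vars in auto)

lemma vars_iff [simp]:
  "St i t \<in> vars d m p q \<longleftrightarrow> i < d" "Ac k t \<in> vars d m p q \<longleftrightarrow> k < m"
  "Rw t \<in> vars d m p q" "Ts j t \<in> vars d m p q \<longleftrightarrow> j < p" "Tr k t \<in> vars d m p q \<longleftrightarrow> k < q"
  by (auto simp: vars_def)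

theorem proposition1:
  fixes M :: "'w measure" and X :: "var \<Rightarrow> 'w \<Rightarrow> real"
    and d m p q :: nat and c1 c2 :: masks
  assumes "prob_space M"
    and "\<And>v. X v \<in> borel_measurable M"
    and "markov_faithful M X (vars d m p q) (dbn_edge d m p q c1)"
    and "markov_faithful M X (vars d m p q) (dbn_edge d m p q c2)"
  shows "same_masks d m p q c1 c2"
proof -
  have edges_eq: "dbn_edge d m p q c1 u v = dbn_edge d m p q c2 u v"
    if "u \<in> vars d m p q" "v \<in> vars d m p q" for u v
    using markov_faithful_dbn_edge_mono[OF assms(3,4)] markov_faithful_dbn_edge_mono[OF assms(4,3)]
      that by blast
  show ?thesis
    unfolding same_masks_def
  proof (intro conjI allI impI)
    fix i i' assume "i < d" "i' < d"
    then show "css c1 i i' = css c2 i i'" using edges_eq[of "St i' 0" "St i 1"] by simp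
  next
    fix i k assume "i < d" "k < m"
    then show "cas c1 i k = cas c2 i k" using edges_eq[of "Ac k 0" "St i 1"] by simp
  next
    fix i j assume "i < d" "j < p"
    then show "cts c1 i j = cts c2 i j" using edges_eq[of "Ts j 1" "St i 1"] by simp
  next
    fix i assume "i < d"
    then show "csr c1 i = csr c2 i" using edges_eq[of "St i 0" "Rw 0"] by simp
  next
    fix k assume "k < m"
    then show "car c1 k = car c2 k" using edges_eq[of "Ac k 0" "Rw 0"] by simp
  next
    fix j j' assume "j < p" "j' < p"
    then show "ctt c1 j j' = ctt c2 j j'" using edges_eq[of "Ts j' 0" "Ts j 1"] by simp
  next
    fix k k' assume "k < q" "k' < q"
    then show "crr c1 k k' = crr c2 k k'" using edges_eq[of "Tr k' 0" "Tr k 1"] by simp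
  qed
qed

end
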